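(* For every $n$ with $2\le n\le\infty$, the two identities $$ysxt\,xy\,hxky \approx ysxt\,yx\,hxky \quad\text{and}\quad xsyt\,xy\,hxky \approx xsyt\,yx\,hxky$$ constitute a finite identity basis for the Baxter monoid $\mathrm{baxt}_n$. Consequently, all Baxter monoids of rank at least $2$ (including rank $\infty$) are equationally equivalent.
   Context: Let $\mathcal{A}=\{1<2<3<\cdots\}$, $\mathcal{A}_n=\{1<\cdots<n\}$, $\mathcal{A}_\infty=\mathcal{A}$. Right strict binary search tree: labelled rooted binary tree in which each node's label is $\ge$ every label in its left subtree and $<$ every label in its right subtree; inserting $a$: if empty create node $a$, else with root label $x$ insert into right subtree if $a>x$, left subtree otherwise. $\mathrm{P}_{\mathrm{sylv}}(w_1\cdots w_k)$ is obtained from the empty tree by inserting $w_k,\dots,w_1$ in this order. Left strict binary search tree: each node's label is $>$ every label in its left subtree and $\le$ every label in its right subtree; inserting $a$: if empty create node $a$, else with root label $x$ insert into left subtree if $a<x$, right subtree otherwise. $\mathrm{P}^\sharp(w_1\cdots w_k)$ is obtained from the empty tree by inserting $w_1,\dots,w_k$ in this order. Set $\mathrm{P}_{\mathrm{baxt}}(w)=(\mathrm{P}^\sharp(w),\mathrm{P}_{\mathrm{sylv}}(w))$; $u\equiv v\iff\mathrm{P}_{\mathrm{baxt}}(u)=\mathrm{P}_{\mathrm{baxt}}(v)$ is a congruence, and $\mathrm{baxt}_n=\mathcal{A}_n^*/{\equiv}$. Identities: $\mathcal{X}$ is a countably infinite alphabet; an identity is $\mathbf{u}\approx\mathbf{v}$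 with $\mathbf{u},\mathbf{v}\in\mathcal{X}^*$; a monoid $S$ satisfies it if $\varphi(\mathbf{u})=\varphi(\mathbf{v})$ for all maps $\varphi:\mathcal{X}\to S$ (extended to monoid homomorphisms). $\mathbf{u}\approx\mathbf{v}$ is derived from a set $\Sigma$ if there is a sequence $\mathbf{u}=\mathbf{u}_1,\dots,\mathbf{u}_m=\mathbf{v}$ with $\mathbf{u}_i=\mathbf{a}\varphi(\mathbf{p})\mathbf{b}$, $\mathbf{u}_{i+1}=\mathbf{a}\varphi(\mathbf{q})\mathbf{b}$ for some words $\mathbf{a},\mathbf{b}\in\mathcal{X}^*$, a monoid endomorphism $\varphi$ of $\mathcal{X}^*$ (letters may go to the empty word), and $\mathbf{p}\approx\mathbf{q}\in\Sigma$. A finite identity basis for $S$ is a finite set $\Sigma$ of identities satisfied by $S$ from which every identity satisfied by $S$ is derived. Two monoids are equationally equivalent if they satisfy the same identities. *)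

theory Defs
  imports Main "HOL-Library.Extended_Nat" "HOL-Library.Tree"
begin

definition alph :: "enat \<Rightarrow> nat set" where
  "alph n = {a. 1 \<le> a \<and> enat a \<le> n}"

fun ins_right :: "nat \<Rightarrow> nat tree \<Rightarrow> nat tree" where
  "ins_right a Leaf = Node Leaf a Leaf"
| "ins_right a (Node l x r) =
     (if a > x then Node l x (ins_right a r) else Node (ins_right a l) x r)"

fun ins_left :: "nat \<Rightarrow> nat tree \<Rightarrow> nat tree" where
  "ins_left a Leaf = Node Leaf a Leaf"
| "ins_left a (Node l x r) =
     (if a < x then Node (ins_left a l) x r else Node l x (ins_left a r))"

definition P_sylv :: "nat list \<Rightarrow> nat tree" where
  "P_sylv w = fold ins_right (rev w) Leaf"

definition P_sharp :: "nat list \<Rightarrow> nat tree" where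
  "P_sharp w = fold ins_left w Leaf"

definition P_baxt :: "nat list \<Rightarrow> nat tree \<times> nat tree" where
  "P_baxt w = (P_sharp w, P_sylv w)"

definition subst :: "(nat \<Rightarrow> 'a list) \<Rightarrow> nat list \<Rightarrow> 'a list" where
  "subst \<phi> u = concat (map \<phi> u)"

text \<open>Every element of baxt_n = A_n^*/\<equiv> is the class of
  a word over A_n and the quotient map is a monoid homomorphism, so an assignment
  X \<Rightarrow> baxt_n is given by an assignment X \<Rightarrow> A_n^* of representatives.\<close>
definition baxt_satisfies :: "enat \<Rightarrow> nat list \<Rightarrow> nat list \<Rightarrow> bool" where
  "baxt_satisfies n u v \<longleftrightarrow>
     (\<forall>\<phi> :: nat \<Rightarrow> nat list. (\<forall>x. set (\<phi> x) \<subseteq> alph n) \<longrightarrow>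
        P_baxt (subst \<phi> u) = P_baxt (subst \<phi> v))"

definition deriv_step :: "(nat list \<times> nat list) set \<Rightarrow> nat list \<Rightarrow> nat list \<Rightarrow> bool" where
  "deriv_step \<Sigma> u w \<longleftrightarrow>
     (\<exists>a b p q (\<phi> :: nat \<Rightarrow> nat list). ((p, q) \<in> \<Sigma> \<or> (q, p) \<in> \<Sigma>) \<and>
        u = a @ subst \<phi> p @ b \<and> w = a @ subst \<phi> q @ b)"

definition derivable :: "(nat list \<times> nat list) set \<Rightarrow> nat list \<Rightarrow> nat list \<Rightarrow> bool" where
  "derivable \<Sigma> = (deriv_step \<Sigma>)\<^sup>*\<^sup>*"

definition finite_identity_basis :: "enat \<Rightarrow> (nat list \<times> nat list) set \<Rightarrow> bool" where
  "finite_identity_basis n \<Sigma> \<longleftrightarrow> finite \<Sigma> \<and>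
     (\<forall>(p, q) \<in> \<Sigma>. baxt_satisfies n p q) \<and>
     (\<forall>u v. baxt_satisfies n u v \<longrightarrow> derivable \<Sigma> u v)"

abbreviation (input) vx :: nat where "vx \<equiv> 0"
abbreviation (input) vy :: nat where "vy \<equiv> 1"
abbreviation (input) vs :: nat where "vs \<equiv> 2"
abbreviation (input) vt :: nat where "vt \<equiv> 3"
abbreviation (input) vh :: nat where "vh \<equiv> 4"
abbreviation (input) vk :: nat where "vk \<equiv> 5"

definition baxter_basis :: "(nat list \<times> nat list) set" where
  "baxter_basis =
    {([vy,vs,vx,vt, vx,vy, vh,vx,vk,vy], [vy,vs,vx,vt, vy,vx, vh,vx,vk,vy]),
     ([vx,vs,vy,vt, vx,vy, vh,vx,vk,vy], [vx,vs,vy,vt, vy,vx, vh,vx,vk,vy])}"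

end

theory Submission
  imports Defs "HOL-Library.Multiset"
begin

(*
  Inserting a letter into a binary search tree commutes with inserting another letter
  as soon as the tree already contains a letter separating the two, for instance one of
  the two letters themselves. P# inserts a word from left to right and P_sylv from right
  to left, so both trees are unchanged by swapping adjacent factors all of whose letters
  occur both earlier and later in the word; the two identities are instances of this.

  Conversely, substituting 1 for a variable x, 2 for a variable y and the empty word for
  all others shows that an identity u = v of any baxt_n with n >= 2 preserves the content
  and, for all x and y, the number of x before the first y and the number of y after the
  last x: these numbers are the lengths of the runs of 1s at the top of the right spine
  of P# and of 2s at the top of the left spine of P_sylv. Words agreeing in these
  statistics are connected by swaps of adjacent distinct letters each occurring both
  before and after the swap (bubble the first letter of the target to the front and
  recurse), and each such swap is an instance of one of the two identities.
*)

section \<open>Commuting insertions into binary search trees\<close>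

fun bst_ins :: "('a \<Rightarrow> 'a \<Rightarrow> bool) \<Rightarrow> 'a \<Rightarrow> 'a tree \<Rightarrow> 'a tree" where
  "bst_ins R a Leaf = \<langle>Leaf, a, Leaf\<rangle>"
| "bst_ins R a \<langle>l, x, r\<rangle> =
     (if R a x then \<langle>bst_ins R a l, x, r\<rangle> else \<langle>l, x, bst_ins R a r\<rangle>)"

fun bst_by :: "('a \<Rightarrow> 'a \<Rightarrow> bool) \<Rightarrow> 'a tree \<Rightarrow> bool" where
  "bst_by R Leaf = True"
| "bst_by R \<langle>l, x, r\<rangle> =
     (bst_by R l \<and> bst_by R r \<and> (\<forall>y\<in>set_tree l. R y x) \<and> (\<forall>y\<in>set_tree r. \<not> R y x))"

lemma ins_left_eq_bst_ins: "ins_left = bst_ins (<)"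
proof (intro ext)
  show "ins_left a t = bst_ins (<) a t" for a :: nat and t
    by (induction t) auto
qed

lemma ins_right_eq_bst_ins: "ins_right = bst_ins (\<le>)"
proof (intro ext)
  show "ins_right a t = bst_ins (\<le>) a t" for a :: nat and t
    by (induction t) auto
qed

lemma set_tree_bst_ins [simp]: "set_tree (bst_ins R a t) = insert a (set_tree t)"
  by (induction t) auto

lemma bst_by_bst_ins: "bst_by R t \<Longrightarrow> bst_by R (bst_ins R a t)"
  by (induction t) auto

(* b separates a from c, so the insertion paths of a and c part at the latest at b. *)
lemma bst_ins_commute:
  assumes "transp R" "transp (\<lambda>x y. \<not> R x y)"
    and "bst_by R t" "b \<in> set_tree t" "R a b \<noteq> R c b"
  shows "bst_ins R a (bst_ins R c t) = bst_ins R c (bst_ins R a t)"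
  using assms(3-)
proof (induction t)
  case Leaf
  then show ?case by simp
next
  case (Node l x r)
  consider "R a x \<noteq> R c x" | "R a x" "R c x" | "\<not> R a x" "\<not> R c x"
    by blast
  then show ?case
  proof cases
    case 1
    then show ?thesis by auto
  next
    case 2
    then have "b \<in> set_tree l"
      using Node.prems assms(2) by (auto dest: transpD)
    then show ?thesis using 2 Node by simp
  next
    case 3
    then have "b \<in> set_tree r"
      using Node.prems assms(1) by (auto dest: transpD)
    then show ?thesis using 3 Node by simp
  qed
qed

(* For (<) the larger, for (\<le>) the smaller of two distinct letters separates them. *)
lemma bst_ins_less_commute:
  fixes a c :: "'a::linorder"
  assumes "bst_by (<) t" "a \<in> set_tree t" "c \<in> set_tree t"
  shows "bst_ins (<) a (bst_ins (<) c t) = bst_ins (<) c (bst_ins (<) a t)"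
proof -
  have trans: "transp ((<) :: 'a \<Rightarrow> _)" "transp (\<lambda>x y :: 'a. \<not> x < y)"
    by (auto intro!: transpI simp: not_less)
  show ?thesis
    using bst_ins_commute[OF trans assms(1)] assms(2,3) by (cases a c rule: linorder_cases) auto
qed

lemma bst_ins_le_commute:
  fixes a c :: "'a::linorder"
  assumes "bst_by (\<le>) t" "a \<in> set_tree t" "c \<in> set_tree t"
  shows "bst_ins (\<le>) a (bst_ins (\<le>) c t) = bst_ins (\<le>) c (bst_ins (\<le>) a t)"
proof -
  have trans: "transp ((\<le>) :: 'a \<Rightarrow> _)" "transp (\<lambda>x y :: 'a. \<not> x \<le> y)"
    by (auto intro!: transpI simp: not_le)
  show ?thesis
    using bst_ins_commute[OF trans assms(1)] assms(2,3) by (cases a c rule: linorder_cases) auto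
qed

lemma fold_commute_apply_on:
  assumes "\<And>a c s. I s \<Longrightarrow> a \<in> A \<Longrightarrow> c \<in> A \<Longrightarrow> f a (f c s) = f c (f a s)"
    and "\<And>a s. I s \<Longrightarrow> a \<in> A \<Longrightarrow> I (f a s)"
    and "I s" "set ys \<subseteq> A" "x \<in> A"
  shows "fold f ys (f x s) = f x (fold f ys s)"
  using assms(3-)
proof (induction ys arbitrary: s)
  case (Cons y ys)
  then have "fold f ys (f x (f y s)) = f x (fold f ys (f y s))"
    using assms(2) by simp
  then show ?case
    using assms(1) Cons.prems by simp
qed simp

lemma fold_append_commute:
  assumes "\<And>a c s. I s \<Longrightarrow> a \<in> A \<Longrightarrow> c \<in> A \<Longrightarrow> f a (f c s) = f c (f a s)"
    and "\<And>a s. I s \<Longrightarrow> a \<in> A \<Longrightarrow> I (f a s)"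
    and "I s" "set xs \<subseteq> A" "set ys \<subseteq> A"
  shows "fold f (xs @ ys) s = fold f (ys @ xs) s"
  using assms(3-)
proof (induction xs arbitrary: s)
  case (Cons x xs)
  then have "fold f (xs @ ys) (f x s) = fold f (ys @ xs) (f x s)"
    using assms(2) by simp
  moreover have "fold f ys (f x s) = f x (fold f ys s)"
    using fold_commute_apply_on[of I A f, OF assms(1,2)] Cons.prems by simp
  ultimately show ?case by simp
qed simp

lemma fold_bst_ins_append_commute:
  assumes commute: "\<And>a c s. bst_by R s \<Longrightarrow> a \<in> set_tree s \<Longrightarrow> c \<in> set_tree s \<Longrightarrow>
      bst_ins R a (bst_ins R c s) = bst_ins R c (bst_ins R a s)"
    and "bst_by R t" "set xs \<subseteq> set_tree t" "set ys \<subseteq> set_tree t"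
  shows "fold (bst_ins R) (xs @ ys) t = fold (bst_ins R) (ys @ xs) t"
proof (rule fold_append_commute)
  let ?I = "\<lambda>s. bst_by R s \<and> set_tree t \<subseteq> set_tree s"
  show "?I s \<Longrightarrow> a \<in> set_tree t \<Longrightarrow> c \<in> set_tree t \<Longrightarrow>
      bst_ins R a (bst_ins R c s) = bst_ins R c (bst_ins R a s)" for a c s
    using commute by blast
  show "?I s \<Longrightarrow> ?I (bst_ins R a s)" for a s
    by (auto simp: bst_by_bst_ins)
qed (use assms in auto)

lemma set_tree_fold_bst_ins [simp]: "set_tree (fold (bst_ins R) w t) = set w \<union> set_tree t"
  by (induction w arbitrary: t) auto

lemma bst_by_fold_bst_ins: "bst_by R t \<Longrightarrow> bst_by R (fold (bst_ins R) w t)"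
  by (induction w arbitrary: t) (auto simp: bst_by_bst_ins)

lemma P_sharp_swap:
  assumes "set X \<union> set Y \<subseteq> set Pre"
  shows "P_sharp (Pre @ X @ Y @ Suf) = P_sharp (Pre @ Y @ X @ Suf)"
proof -
  let ?t = "fold (bst_ins (<)) Pre Leaf"
  have "fold (bst_ins (<)) (X @ Y) ?t = fold (bst_ins (<)) (Y @ X) ?t"
    using assms by (intro fold_bst_ins_append_commute bst_ins_less_commute)
      (auto simp: bst_by_fold_bst_ins)
  then show ?thesis
    unfolding P_sharp_def ins_left_eq_bst_ins by (metis append.assoc fold_append o_apply)
qed

lemma P_sylv_swap:
  assumes "set X \<union> set Y \<subseteq> set Suf"
  shows "P_sylv (Pre @ X @ Y @ Suf) = P_sylv (Pre @ Y @ X @ Suf)"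
proof -
  let ?t = "fold (bst_ins (\<le>)) (rev Suf) Leaf"
  have "fold (bst_ins (\<le>)) (rev Y @ rev X) ?t = fold (bst_ins (\<le>)) (rev X @ rev Y) ?t"
    using assms by (intro fold_bst_ins_append_commute bst_ins_le_commute)
      (auto simp: bst_by_fold_bst_ins)
  then show ?thesis
    unfolding P_sylv_def ins_right_eq_bst_ins by (metis append.assoc fold_append o_apply rev_append)
qed

lemma P_baxt_swap:
  assumes "set X \<union> set Y \<subseteq> set Pre \<inter> set Suf"
  shows "P_baxt (Pre @ X @ Y @ Suf) = P_baxt (Pre @ Y @ X @ Suf)"
  using assms P_sharp_swap[of X Y Pre Suf] P_sylv_swap[of X Y Suf Pre] by (simp add: P_baxt_def)

section \<open>Soundness of the basis\<close>

lemma subst_Nil [simp]: "subst \<phi> [] = []"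
  by (simp add: subst_def)

lemma subst_Cons [simp]: "subst \<phi> (x # xs) = \<phi> x @ subst \<phi> xs"
  by (simp add: subst_def)

lemma subst_append [simp]: "subst \<phi> (xs @ ys) = subst \<phi> xs @ subst \<phi> ys"
  by (simp add: subst_def)

lemma subst_subst: "subst \<psi> (subst \<phi> p) = subst (\<lambda>z. subst \<psi> (\<phi> z)) p"
  by (induction p) auto

lemma baxter_basis_sound:
  assumes "(p, q) \<in> baxter_basis"
  shows "P_baxt (A @ subst \<phi> p @ B) = P_baxt (A @ subst \<phi> q @ B)"
proof -
  let ?x = "\<phi> 0" and ?y = "\<phi> 1" and ?s = "\<phi> 2" and ?t = "\<phi> 3" and ?h = "\<phi> 4" and ?k = "\<phi> 5"
  have suffix: "P_baxt (Pre @ ?x @ ?y @ ?h @ ?x @ ?k @ ?y @ B) = P_baxt (Pre @ ?y @ ?x @ ?h @ ?x @ ?k @ ?y @ B)"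
    if "set ?x \<union> set ?y \<subseteq> set Pre" for Pre
    using that by (intro P_baxt_swap) auto
  from assms consider
      "p = [1,2,0,3,0,1,4,0,5,1]" "q = [1,2,0,3,1,0,4,0,5,1]"
    | "p = [0,2,1,3,0,1,4,0,5,1]" "q = [0,2,1,3,1,0,4,0,5,1]"
    unfolding baxter_basis_def by auto
  then show ?thesis
  proof cases
    case 1
    then show ?thesis
      using suffix[of "A @ ?y @ ?s @ ?x @ ?t"] by (auto simp: numeral_eq_Suc)
  next
    case 2
    then show ?thesis
      using suffix[of "A @ ?x @ ?s @ ?y @ ?t"] by (auto simp: numeral_eq_Suc)
  qed
qed

lemma deriv_step_P_baxt_subst:
  assumes "deriv_step baxter_basis u w"
  shows "P_baxt (subst \<psi> u) = P_baxt (subst \<psi> w)"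
proof -
  obtain a b p q \<phi> where pq: "(p, q) \<in> baxter_basis \<or> (q, p) \<in> baxter_basis"
    and "u = a @ subst \<phi> p @ b" "w = a @ subst \<phi> q @ b"
    using assms unfolding deriv_step_def by blast
  then have "subst \<psi> u = subst \<psi> a @ subst (\<lambda>z. subst \<psi> (\<phi> z)) p @ subst \<psi> b"
    and "subst \<psi> w = subst \<psi> a @ subst (\<lambda>z. subst \<psi> (\<phi> z)) q @ subst \<psi> b"
    by (simp_all add: subst_subst)
  with pq show ?thesis
    using baxter_basis_sound by metis
qed

lemma derivable_baxt_satisfies: "derivable baxter_basis u v \<Longrightarrow> baxt_satisfies n u v"
  unfolding derivable_def baxt_satisfies_def
  by (induction rule: rtranclp_induct) (auto dest: deriv_step_P_baxt_subst)

section \<open>Words connected by guarded swaps\<close>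

definition count_before :: "'a \<Rightarrow> 'a \<Rightarrow> 'a list \<Rightarrow> nat" where
  "count_before y x w = count_list (takeWhile (\<lambda>c. c \<noteq> y) w) x"

definition count_after :: "'a \<Rightarrow> 'a \<Rightarrow> 'a list \<Rightarrow> nat" where
  "count_after y x w = count_before y x (rev w)"

(* P collects the letters of a prefix that has already been split off. *)
definition same_counts :: "'a set \<Rightarrow> 'a list \<Rightarrow> 'a list \<Rightarrow> bool" where
  "same_counts P u v \<longleftrightarrow> mset u = mset v \<and>
     (\<forall>x y. y \<notin> P \<longrightarrow> count_before y x u = count_before y x v) \<and>
     (\<forall>x y. count_after y x u = count_after y x v)"

definition guarded_swap :: "'a set \<Rightarrow> 'a list \<Rightarrow> 'a list \<Rightarrow> bool" where
  "guarded_swap P u w \<longleftrightarrow> (\<exists>A B a b. a \<noteq> b \<and> {a, b} \<subseteq> P \<union> set A \<and> {a, b} \<subseteq> set B \<and>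
     u = A @ [a, b] @ B \<and> w = A @ [b, a] @ B)"

lemma count_before_Nil [simp]: "count_before y x [] = 0"
  by (simp add: count_before_def)

lemma count_before_Cons [simp]:
  "count_before y x (a # w) = (if a = y then 0 else (if a = x then 1 else 0) + count_before y x w)"
  by (simp add: count_before_def)

lemma count_before_append_notin:
  "y \<notin> set A \<Longrightarrow> count_before y x (A @ w) = count_list A x + count_before y x w"
  by (induction A) auto

lemma count_before_append_in:
  "y \<in> set A \<Longrightarrow> count_before y x (A @ w) = count_before y x A"
  by (induction A) auto

lemma count_before_notin: "y \<notin> set w \<Longrightarrow> count_before y x w = count_list w x"
  using count_before_append_notin[of y w x "[]"] by (simp add: count_before_def)

lemma count_after_notin: "y \<notin> set w \<Longrightarrow> count_after y x w = count_list w x"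
  by (simp add: count_after_def count_before_notin)

lemma count_before_le: "count_before y x w \<le> count_list w x"
  by (induction w) auto

lemma count_after_le: "count_after y x w \<le> count_list w x"
  using count_before_le[of y x "rev w"] by (simp add: count_after_def)

lemma count_after_Cons:
  "count_after y x (a # w) =
     (if y \<in> set w then count_after y x w else count_list w x + (if a = x \<and> a \<noteq> y then 1 else 0))"
  by (auto simp: count_after_def count_before_append_in count_before_append_notin count_before_notin)

lemma count_before_self [simp]: "count_before x x w = 0"
  by (induction w) auto

lemma count_after_self [simp]: "count_after x x w = 0"
  by (simp add: count_after_def)

lemma guarded_swap_Cons:
  assumes "guarded_swap (insert c P) u w"
  shows "guarded_swap P (c # u) (c # w)"
proof -
  obtain A B a b where "a \<noteq> b" "{a, b} \<subseteq> insert c P \<union> set A" "{a, b} \<subseteq> set B"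
    "u = A @ [a, b] @ B" "w = A @ [b, a] @ B"
    using assms unfolding guarded_swap_def by blast
  then show ?thesis
    unfolding guarded_swap_def by (intro exI[of _ "c # A"] exI[of _ B] exI[of _ a] exI[of _ b]) auto
qed

lemma guarded_swaps_Cons:
  "(guarded_swap (insert c P))\<^sup>*\<^sup>* u w \<Longrightarrow> (guarded_swap P)\<^sup>*\<^sup>* (c # u) (c # w)"
  by (induction rule: rtranclp_induct) (auto intro: rtranclp.rtrancl_into_rtrancl guarded_swap_Cons)

lemma guarded_swap_same_counts:
  assumes "guarded_swap P u w"
  shows "same_counts P u w"
proof -
  obtain A B a b where ab: "{a, b} \<subseteq> P \<union> set A" "{a, b} \<subseteq> set B"
    and u: "u = A @ [a, b] @ B" and w: "w = A @ [b, a] @ B"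
    using assms unfolding guarded_swap_def by blast
  have "count_before y x u = count_before y x w" if "y \<notin> P" for x y
    using ab that unfolding u w
    by (cases "y \<in> set A") (auto simp: count_before_append_in count_before_append_notin)
  moreover have "count_after y x u = count_after y x w" for x y
    using ab unfolding u w count_after_def
    by (cases "y \<in> set B") (auto simp: count_before_append_in count_before_append_notin)
  ultimately show ?thesis
    unfolding same_counts_def u w by auto
qed

lemma same_counts_sym: "same_counts P u v \<Longrightarrow> same_counts P v u"
  by (simp add: same_counts_def)

lemma same_counts_trans: "same_counts P u v \<Longrightarrow> same_counts P v w \<Longrightarrow> same_counts P u w"
  by (simp add: same_counts_def)

lemma guarded_swaps_same_counts: "(guarded_swap P)\<^sup>*\<^sup>* u w \<Longrightarrow> same_counts P u w"
  by (induction rule: rtranclp_induct)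
     (auto simp: same_counts_def dest: guarded_swap_same_counts)

lemma guarded_swaps_bubble:
  assumes "b \<in> P" "b \<in> set B"
    and "\<And>A1 c A2. A = A1 @ c # A2 \<Longrightarrow> c \<noteq> b \<and> c \<in> P \<union> set A1 \<and> c \<in> set (A2 @ B)"
  shows "(guarded_swap P)\<^sup>*\<^sup>* (A @ b # B) (b # A @ B)"
  using assms(2,3)
proof (induction A arbitrary: B rule: rev_induct)
  case (snoc c A)
  have c: "c \<noteq> b" "c \<in> P \<union> set A" "c \<in> set B"
    using snoc.prems(2)[of A c "[]"] by auto
  have "guarded_swap P (A @ [c, b] @ B) (A @ [b, c] @ B)"
    unfolding guarded_swap_def using c assms(1) snoc.prems(1) by blast
  moreover have "(guarded_swap P)\<^sup>*\<^sup>* (A @ b # c # B) (b # A @ c # B)"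
    using snoc.prems by (intro snoc.IH) force+
  ultimately show ?case by simp
qed simp

lemma same_counts_Cons:
  assumes "same_counts P (a # u) (a # v)"
  shows "same_counts (insert a P) u v"
proof -
  have "mset u = mset v"
    using assms by (simp add: same_counts_def)
  have "count_before y x u = count_before y x v" if "y \<notin> insert a P" for x y
  proof -
    have "count_before y x (a # u) = count_before y x (a # v)"
      using assms that by (simp add: same_counts_def del: count_before_Cons)
    with that show ?thesis by (auto split: if_splits)
  qed
  moreover have "count_after y x u = count_after y x v" for x y
  proof (cases "y \<in> set u")
    case True
    have "count_after y x (a # u) = count_after y x (a # v)"
      using assms unfolding same_counts_def by blast
    with True show ?thesis
      using mset_eq_setD[OF \<open>mset u = mset v\<close>] by (simp add: count_after_Cons)
  next
    case False
    then show ?thesis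
      using \<open>mset u = mset v\<close> mset_eq_setD[OF \<open>mset u = mset v\<close>]
      by (metis count_after_notin count_mset)
  qed
  ultimately show ?thesis
    using \<open>mset u = mset v\<close> unfolding same_counts_def by blast
qed

lemma same_counts_head_mismatch:
  assumes same: "same_counts P (A @ b # B) (b # v)" and "b \<notin> set A" "A \<noteq> []"
  shows "b \<in> P" "b \<in> set B"
proof -
  obtain a A' where A: "A = a # A'" and "a \<noteq> b"
    using assms(2,3) by (cases A) auto
  show "b \<in> P"
  proof (rule ccontr)
    assume "b \<notin> P"
    \<comment> \<open>then no a may precede the first b, as in b # v\<close>
    then have "count_before b a (A @ b # B) = count_before b a (b # v)"
      using same unfolding same_counts_def by blast
    then show False
      using A \<open>a \<noteq> b\<close> by simp
  qed
  show "b \<in> set B"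
  proof (rule ccontr)
    assume "b \<notin> set B"
    \<comment> \<open>then b occurs once, so all a of b # v, but not those in A, follow the last b\<close>
    have "mset (A @ b # B) = mset (b # v)"
      using same by (simp add: same_counts_def)
    then have "count_list (A @ b # B) x = count_list (b # v) x" for x
      by (metis count_mset)
    from this[of b] have "b \<notin> set v"
      using \<open>b \<notin> set A\<close> \<open>b \<notin> set B\<close> by (simp add: count_list_0_iff)
    then have "count_after b a (b # v) = count_list (A @ b # B) a"
      using \<open>a \<noteq> b\<close> \<open>count_list (A @ b # B) a = _\<close> by (simp add: count_after_Cons count_after_notin)
    moreover have "count_after b a (A @ b # B) = count_list B a"
      using \<open>b \<notin> set B\<close> by (simp add: count_after_def count_before_append_notin)
    moreover have "count_after b a (A @ b # B) = count_after b a (b # v)"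
      using same unfolding same_counts_def by blast
    ultimately show False
      using A \<open>a \<noteq> b\<close> by simp
  qed
qed

lemma same_counts_head_mismatch_prefix:
  assumes same: "same_counts P (A1 @ c # A2 @ b # B) (b # v)" and "b \<notin> set (A1 @ c # A2)"
  shows "c \<in> P \<union> set A1" "c \<in> set (A2 @ B)"
proof -
  let ?u = "A1 @ c # A2 @ b # B"
  have "c \<noteq> b"
    using assms(2) by auto
  show "c \<in> P \<union> set A1"
  proof (rule ccontr)
    assume "c \<notin> P \<union> set A1"
    \<comment> \<open>then no b precedes the first c, unlike in b # v\<close>
    then have "count_before c b ?u = count_before c b (b # v)"
      using same unfolding same_counts_def by blast
    then show False
      using \<open>c \<notin> P \<union> set A1\<close> assms(2) \<open>c \<noteq> b\<close> by (simp add: count_before_append_notin)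
  qed
  show "c \<in> set (A2 @ B)"
  proof (rule ccontr)
    assume "c \<notin> set (A2 @ B)"
    \<comment> \<open>then every b follows the last c, unlike the leading b of b # v\<close>
    have "mset ?u = mset (b # v)"
      using same by (simp add: same_counts_def)
    then have count: "count_list ?u b = count_list (b # v) b"
      by (metis count_mset)
    have "c \<in> set v"
      using mset_eq_setD[OF \<open>mset ?u = mset (b # v)\<close>] \<open>c \<noteq> b\<close> by auto
    have "count_after c b ?u = count_list ?u b"
      using \<open>c \<notin> set (A2 @ B)\<close> assms(2) by (auto simp: count_after_def count_before_append_notin)
    moreover have "count_after c b (b # v) \<le> count_list v b"
      using \<open>c \<in> set v\<close> count_after_le by (simp add: count_after_Cons)
    moreover have "count_after c b ?u = count_after c b (b # v)"
      using same unfolding same_counts_def by blast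
    ultimately show False
      using count by simp
  qed
qed

lemma same_counts_guarded_swaps:
  assumes "same_counts P u v"
  shows "(guarded_swap P)\<^sup>*\<^sup>* u v"
  using assms
proof (induction "length u" arbitrary: P u v)
  case 0
  then show ?case by (simp add: same_counts_def)
next
  case (Suc n)
  then have "mset u = mset v" "u \<noteq> []"
    by (auto simp: same_counts_def)
  then obtain b v' where v: "v = b # v'"
    by (cases v) auto
  then have "b \<in> set u"
    using mset_eq_setD[OF \<open>mset u = mset v\<close>] by simp
  then obtain A B where u: "u = A @ b # B" and "b \<notin> set A"
    by (metis split_list_first)
  have same: "same_counts P (A @ b # B) (b # v')"
    using Suc.prems unfolding u v .
  have to_front: "(guarded_swap P)\<^sup>*\<^sup>* u (b # A @ B)"
  proof (cases "A = []")
    case False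
    have "b \<in> P" "b \<in> set B"
      using same_counts_head_mismatch[OF same \<open>b \<notin> set A\<close> False] by auto
    moreover have "c \<noteq> b \<and> c \<in> P \<union> set A1 \<and> c \<in> set (A2 @ B)" if "A = A1 @ c # A2" for A1 c A2
    proof -
      have "same_counts P (A1 @ c # A2 @ b # B) (b # v')" "b \<notin> set (A1 @ c # A2)"
        using same \<open>b \<notin> set A\<close> unfolding that by simp_all
      then show ?thesis
        using same_counts_head_mismatch_prefix by fastforce
    qed
    ultimately show ?thesis
      unfolding u by (rule guarded_swaps_bubble)
  qed (simp add: u)
  then have "same_counts P (b # A @ B) (b # v')"
    using Suc.prems guarded_swaps_same_counts same_counts_sym same_counts_trans unfolding v by blast
  then have "same_counts (insert b P) (A @ B) v'"
    by (rule same_counts_Cons)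
  then have "(guarded_swap (insert b P))\<^sup>*\<^sup>* (A @ B) v'"
    using Suc.hyps u by simp
  then show ?case
    using to_front guarded_swaps_Cons unfolding v by (metis rtranclp_trans)
qed

section \<open>Completeness of the basis\<close>

lemma deriv_step_instance:
  "(p, q) \<in> \<Sigma> \<Longrightarrow> deriv_step \<Sigma> (a @ subst \<phi> p @ b) (a @ subst \<phi> q @ b)"
  unfolding deriv_step_def by blast

lemma deriv_step_sym: "deriv_step \<Sigma> u w \<Longrightarrow> deriv_step \<Sigma> w u"
  unfolding deriv_step_def by blast

lemma split_list_two_elems:
  assumes "a \<noteq> b" "a \<in> set xs" "b \<in> set xs"
  obtains ys zs us where "xs = ys @ a # zs @ b # us" | ys zs us where "xs = ys @ b # zs @ a # us"
proof -
  obtain ys rs where xs: "xs = ys @ a # rs"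
    using assms(2) by (metis split_list)
  show thesis
  proof (cases "b \<in> set rs")
    case True
    then obtain zs us where "rs = zs @ b # us"
      by (metis split_list)
    with xs that(1) show ?thesis by simp
  next
    case False
    then have "b \<in> set ys"
      using xs assms by auto
    then obtain ys' zs where "ys = ys' @ b # zs"
      by (metis split_list)
    with xs that(2) show ?thesis by simp
  qed
qed

lemma baxter_basis_swap_step:
  assumes "x \<noteq> y" "{x, y} \<subseteq> set A"
  shows "deriv_step baxter_basis (A @ [x, y] @ B1 @ x # B2 @ y # B3) (A @ [y, x] @ B1 @ x # B2 @ y # B3)"
proof -
  have "y \<noteq> x" "y \<in> set A" "x \<in> set A"
    using assms by auto
  then show ?thesis
  proof (cases rule: split_list_two_elems)
    case (1 A1 A2 A3)
    then show ?thesis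
      using deriv_step_instance[of "[1,2,0,3,0,1,4,0,5,1]" "[1,2,0,3,1,0,4,0,5,1]" baxter_basis
          A1 "nth [[x], [y], A2, A3, B1, B2]" B3]
      by (simp add: baxter_basis_def numeral_eq_Suc)
  next
    case (2 A1 A2 A3)
    then show ?thesis
      using deriv_step_instance[of "[0,2,1,3,0,1,4,0,5,1]" "[0,2,1,3,1,0,4,0,5,1]" baxter_basis
          A1 "nth [[x], [y], A2, A3, B1, B2]" B3]
      by (simp add: baxter_basis_def numeral_eq_Suc)
  qed
qed

lemma guarded_swap_deriv_step:
  assumes "guarded_swap {} u w"
  shows "deriv_step baxter_basis u w"
proof -
  obtain A B a b where "a \<noteq> b" "{a, b} \<subseteq> set A" "{a, b} \<subseteq> set B"
    and u: "u = A @ [a, b] @ B" and w: "w = A @ [b, a] @ B"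
    using assms unfolding guarded_swap_def by auto
  then have "a \<noteq> b" "a \<in> set B" "b \<in> set B"
    by auto
  then show ?thesis
  proof (cases rule: split_list_two_elems)
    case (1 B1 B2 B3)
    then show ?thesis
      using baxter_basis_swap_step[of a b A] \<open>a \<noteq> b\<close> \<open>{a, b} \<subseteq> set A\<close> unfolding u w by simp
  next
    case (2 B1 B2 B3)
    then show ?thesis
      using baxter_basis_swap_step[of b a A] \<open>a \<noteq> b\<close> \<open>{a, b} \<subseteq> set A\<close> deriv_step_sym
      unfolding u w by (simp add: insert_commute)
  qed
qed

lemma same_counts_derivable: "same_counts {} u v \<Longrightarrow> derivable baxter_basis u v"
  unfolding derivable_def
  by (rule mono_rtranclp[rule_format, OF guarded_swap_deriv_step same_counts_guarded_swaps])

section \<open>Statistics recovered in rank two\<close>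

fun right_spine :: "'a tree \<Rightarrow> 'a list" where
  "right_spine Leaf = []"
| "right_spine \<langle>l, x, r\<rangle> = x # right_spine r"

fun left_spine :: "'a tree \<Rightarrow> 'a list" where
  "left_spine Leaf = []"
| "left_spine \<langle>l, x, r\<rangle> = x # left_spine l"

lemma right_spine_bst_ins_less:
  fixes c :: "'a::linorder"
  shows "right_spine (bst_ins (<) c t) =
     (if \<forall>x\<in>set (right_spine t). x \<le> c then right_spine t @ [c] else right_spine t)"
  by (induction t) (auto simp: not_less)

lemma left_spine_bst_ins_le:
  fixes c :: "'a::linorder"
  shows "left_spine (bst_ins (\<le>) c t) =
     (if \<forall>x\<in>set (left_spine t). c \<le> x then left_spine t @ [c] else left_spine t)"
  by (induction t) auto

lemma takeWhile_right_spine_fold_bst_ins_less: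
  fixes a :: "'a::linorder"
  assumes "\<forall>c\<in>set w. a \<le> c"
  shows "takeWhile ((=) a) (right_spine (fold (bst_ins (<)) w t)) =
    (if set (right_spine t) \<subseteq> {a} then right_spine t @ takeWhile ((=) a) w
     else takeWhile ((=) a) (right_spine t))"
  using assms
proof (induction w arbitrary: t)
  case (Cons c w)
  then show ?case
    by (auto simp: right_spine_bst_ins_less takeWhile_append subset_iff)
qed auto

lemma takeWhile_left_spine_fold_bst_ins_le:
  fixes a :: "'a::linorder"
  assumes "\<forall>c\<in>set w. c \<le> a"
  shows "takeWhile ((=) a) (left_spine (fold (bst_ins (\<le>)) w t)) =
    (if set (left_spine t) \<subseteq> {a} then left_spine t @ takeWhile ((=) a) w
     else takeWhile ((=) a) (left_spine t))"
  using assms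
proof (induction w arbitrary: t)
  case (Cons c w)
  then show ?case
    by (auto simp: left_spine_bst_ins_le takeWhile_append subset_iff)
qed auto

lemma takeWhile_right_spine_P_sharp:
  "\<forall>c\<in>set w. a \<le> c \<Longrightarrow> takeWhile ((=) a) (right_spine (P_sharp w)) = takeWhile ((=) a) w"
  using takeWhile_right_spine_fold_bst_ins_less[of w a Leaf]
  by (simp add: P_sharp_def ins_left_eq_bst_ins)

lemma takeWhile_left_spine_P_sylv:
  "\<forall>c\<in>set w. c \<le> a \<Longrightarrow> takeWhile ((=) a) (left_spine (P_sylv w)) = takeWhile ((=) a) (rev w)"
  using takeWhile_left_spine_fold_bst_ins_le[of "rev w" a Leaf]
  by (simp add: P_sylv_def ins_right_eq_bst_ins)

lemma mset_inorder_P_sharp: "mset (inorder (P_sharp w)) = mset w"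
proof -
  have "mset (inorder (fold ins_left w t)) = mset w + mset (inorder t)" for t
  proof (induction w arbitrary: t)
    case (Cons c w)
    have "mset (inorder (ins_left c t)) = add_mset c (mset (inorder t))"
      by (induction t) auto
    with Cons show ?case by simp
  qed simp
  then show ?thesis
    by (simp add: P_sharp_def)
qed

definition pair_subst :: "nat \<Rightarrow> nat \<Rightarrow> nat \<Rightarrow> nat list" where
  "pair_subst x y z = (if z = x then [1] else if z = y then [2] else [])"

lemma set_pair_subst: "set (pair_subst x y z) \<subseteq> {1, 2}"
  by (auto simp: pair_subst_def)

lemma set_subst_pair_subst: "set (subst (pair_subst x y) w) \<subseteq> {1, 2}"
  using set_pair_subst by (induction w) auto

lemma rev_subst_pair_subst: "rev (subst (pair_subst x y) w) = subst (pair_subst x y) (rev w)"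
  by (induction w) (auto simp: pair_subst_def)

lemma count_subst_pair_subst: "count_list (subst (pair_subst x y) w) 1 = count_list w x"
  by (induction w) (auto simp: pair_subst_def)

lemma length_takeWhile_subst_pair_subst:
  assumes "x \<noteq> y"
  shows "length (takeWhile ((=) 1) (subst (pair_subst x y) w)) = count_before y x w"
    and "length (takeWhile ((=) 2) (subst (pair_subst x y) w)) = count_before x y w"
  using assms by (induction w) (auto simp: pair_subst_def)

lemma alph_two: "2 \<le> n \<Longrightarrow> {1, 2} \<subseteq> alph n"
  by (auto simp: alph_def numeral_eq_enat one_enat_def intro: order_trans[of _ 2])

lemma baxt_satisfies_same_counts:
  assumes "2 \<le> n" "baxt_satisfies n u v"
  shows "same_counts {} u v"
proof -
  have eq: "P_sharp (subst (pair_subst x y) u) = P_sharp (subst (pair_subst x y) v)"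
     "P_sylv (subst (pair_subst x y) u) = P_sylv (subst (pair_subst x y) v)" for x y
    using assms alph_two set_pair_subst
    unfolding baxt_satisfies_def P_baxt_def by (meson order_trans prod.inject)+
  have "count_list u x = count_list v x" for x
  proof -
    have "count_list (subst (pair_subst x x) u) 1 = count_list (subst (pair_subst x x) v) 1"
      using arg_cong[OF eq(1)[of x x], of "\<lambda>t. mset (inorder t)"]
      by (metis count_mset mset_inorder_P_sharp)
    then show ?thesis
      by (simp only: count_subst_pair_subst)
  qed
  then have "mset u = mset v"
    by (simp add: multiset_eq_iff count_mset)
  moreover have "count_before y x u = count_before y x v" for x y
  proof (cases "x = y")
    case False
    have "\<forall>c\<in>set (subst (pair_subst x y) w). 1 \<le> c" for w
      using set_subst_pair_subst[of x y w] by auto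
    then have "length (takeWhile ((=) 1) (subst (pair_subst x y) u)) =
        length (takeWhile ((=) 1) (subst (pair_subst x y) v))"
      using eq(1) by (metis takeWhile_right_spine_P_sharp)
    then show ?thesis
      by (simp only: length_takeWhile_subst_pair_subst[OF False])
  qed simp
  moreover have "count_after y x u = count_after y x v" for x y
  proof (cases "x = y")
    case False
    have "\<forall>c\<in>set (subst (pair_subst y x) w). c \<le> 2" for w
      using set_subst_pair_subst[of y x w] by auto
    then have "length (takeWhile ((=) 2) (subst (pair_subst y x) (rev u))) =
        length (takeWhile ((=) 2) (subst (pair_subst y x) (rev v)))"
      using eq(2) by (metis takeWhile_left_spine_P_sylv rev_subst_pair_subst)
    then show ?thesis
      using False by (simp only: length_takeWhile_subst_pair_subst count_after_def)
  qed simp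
  ultimately show ?thesis
    by (simp add: same_counts_def)
qed

lemma baxt_satisfies_iff_derivable:
  "2 \<le> n \<Longrightarrow> baxt_satisfies n u v \<longleftrightarrow> derivable baxter_basis u v"
  using baxt_satisfies_same_counts same_counts_derivable derivable_baxt_satisfies by blast

theorem theorem4p10:
  shows "(\<forall>n::enat. 2 \<le> n \<longrightarrow> finite_identity_basis n baxter_basis) \<and>
         (\<forall>m n :: enat. 2 \<le> m \<longrightarrow> 2 \<le> n \<longrightarrow>
            (\<forall>u v. baxt_satisfies m u v \<longleftrightarrow> baxt_satisfies n u v))"
proof (intro conjI allI impI)
  fix n :: enat
  assume "2 \<le> n"
  have "derivable baxter_basis p q" if "(p, q) \<in> baxter_basis" for p q
    using deriv_step_instance[OF that, of "[]" "\<lambda>z. [z]" "[]"]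
    by (simp add: derivable_def subst_def)
  then show "finite_identity_basis n baxter_basis"
    using baxt_satisfies_iff_derivable[OF \<open>2 \<le> n\<close>]
    unfolding finite_identity_basis_def by (auto simp: baxter_basis_def)
next
  fix m n :: enat and u v
  assume "2 \<le> m" "2 \<le> n"
  then show "baxt_satisfies m u v \<longleftrightarrow> baxt_satisfies n u v"
    using baxt_satisfies_iff_derivable by blast
qed

end
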